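(* Fix a nonempty directed edge set $\mathcal{E}$ and a randomized design with $0<\mathbb{E}[z_i]<1$ for all $i$. Then there is no choice of deterministic weights ${\bf w},{\bf v}$ such that the individually weighted linear estimator $\sum_i(w_iz_i+v_i(1-z_i))Y_i({\bf z})$ has expectation equal to $\mathrm{AIE}$ for every choice of real parameters $\alpha,\beta,\{\gamma_{ki}\}_{(k,i)\in\mathcal{E}}$ of the heterogeneous additive network effects model.
   Context: Population $[n]$; random treatment vector ${\bf z}\in\{0,1\}^n$ drawn from a randomized design. Heterogeneous additive network effects model: $Y_i({\bf z})=\alpha_i+\beta_iz_i+\sum_{k\in[n]}\gamma_{ki}z_k$ with deterministic real parameters, $\gamma_{ki}=0$ unless $(k,i)\in\mathcal{E}$, where $\mathcal{E}$ is a set of ordered pairs $(k,i)$, $k\neq i$. Average interference effect: $\mathrm{AIE}=\frac1n\sum_i(Y_i({\bf e}_{[n]\setminus\{i\}})-Y_i({\bf 0}))=\frac1n\sum_{(k,i)\in\mathcal{E}}\gamma_{ki}$, where ${\bf e}_S$ is the indicator vector of $S\subseteq[n]$. *)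

theory Defs
  imports "HOL-Probability.Probability"
begin

text \<open>Population is {..<n}; a treatment vector is z :: nat \<Rightarrow> bool (z i = unit i treated).
  Heterogeneous additive network effects model:
  Y_i(z) = alpha_i + beta_i z_i + sum_k gamma_{ki} z_k.\<close>

definition Ynet :: "nat \<Rightarrow> (nat \<Rightarrow> real) \<Rightarrow> (nat \<Rightarrow> real) \<Rightarrow> (nat \<Rightarrow> nat \<Rightarrow> real)
    \<Rightarrow> nat \<Rightarrow> (nat \<Rightarrow> bool) \<Rightarrow> real" where
  "Ynet n \<alpha> \<beta> \<gamma> i z = \<alpha> i + \<beta> i * of_bool (z i) + (\<Sum>k<n. \<gamma> k i * of_bool (z k))"

definition AIE :: "nat \<Rightarrow> (nat \<Rightarrow> real) \<Rightarrow> (nat \<Rightarrow> real) \<Rightarrow> (nat \<Rightarrow> nat \<Rightarrow> real) \<Rightarrow> real" where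
  "AIE n \<alpha> \<beta> \<gamma> = (1 / real n) *
     (\<Sum>i<n. Ynet n \<alpha> \<beta> \<gamma> i (\<lambda>k. k < n \<and> k \<noteq> i) - Ynet n \<alpha> \<beta> \<gamma> i (\<lambda>_. False))"

definition lin_est :: "nat \<Rightarrow> (nat \<Rightarrow> real) \<Rightarrow> (nat \<Rightarrow> real) \<Rightarrow> (nat \<Rightarrow> real) \<Rightarrow> (nat \<Rightarrow> real)
    \<Rightarrow> (nat \<Rightarrow> nat \<Rightarrow> real) \<Rightarrow> (nat \<Rightarrow> bool) \<Rightarrow> real" where
  "lin_est n w v \<alpha> \<beta> \<gamma> z =
     (\<Sum>i<n. (w i * of_bool (z i) + v i * (1 - of_bool (z i))) * Ynet n \<alpha> \<beta> \<gamma> i z)"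

end

theory Submission
  imports Defs
begin

text \<open>Take the model without interference (all \<open>\<gamma> = 0\<close>), where \<open>AIE = 0\<close>. Choosing
  \<open>\<beta> = e\<^sub>j\<close> makes the estimator \<open>w\<^sub>j z\<^sub>j\<close>, with mean \<open>w\<^sub>j p\<^sub>j\<close>; choosing \<open>\<alpha> = e\<^sub>j\<close> makes it
  \<open>w\<^sub>j z\<^sub>j + v\<^sub>j (1 - z\<^sub>j)\<close>, with mean \<open>w\<^sub>j p\<^sub>j + v\<^sub>j (1 - p\<^sub>j)\<close>. Since \<open>0 < p\<^sub>j < 1\<close>, unbiasedness
  forces all weights to vanish, so the estimator is identically zero. But a single
  edge \<open>(k, i)\<close> with \<open>\<gamma>\<^sub>k\<^sub>i = 1\<close> gives \<open>AIE = 1/n \<noteq> 0\<close>.\<close>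

lemma AIE_eq_sum_interference:
  "AIE n \<alpha> \<beta> \<gamma> = (\<Sum>i<n. \<Sum>k\<in>{..<n} - {i}. \<gamma> k i) / real n"
proof -
  have "Ynet n \<alpha> \<beta> \<gamma> i (\<lambda>k. k < n \<and> k \<noteq> i) - Ynet n \<alpha> \<beta> \<gamma> i (\<lambda>_. False)
      = (\<Sum>k\<in>{..<n} - {i}. \<gamma> k i)" for i
    by (simp add: Ynet_def Diff_eq Compl_eq)
  then show ?thesis
    by (simp add: AIE_def)
qed

lemma AIE_no_interference: "AIE n \<alpha> \<beta> (\<lambda>_ _. 0) = 0"
  by (simp add: AIE_eq_sum_interference)

lemma AIE_single_edge:
  fixes k0 i0 :: nat
  assumes "k0 < n" "i0 < n" "k0 \<noteq> i0"
  shows "AIE n (\<lambda>_. 0) (\<lambda>_. 0) (\<lambda>k i. of_bool (k = k0 \<and> i = i0)) = 1 / real n"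
  unfolding AIE_eq_sum_interference using assms
  by (subst sum.mono_neutral_right[where S = "{i0}"]) (auto simp: Int_insert_right)

lemma lin_est_zero_weights:
  assumes "\<And>j. j < n \<Longrightarrow> w j = 0 \<and> v j = 0"
  shows "lin_est n w v \<alpha> \<beta> \<gamma> = (\<lambda>_. 0)"
  using assms by (simp add: lin_est_def fun_eq_iff)

lemma lin_est_unit_baseline:
  assumes "j < n"
  shows "lin_est n w v (\<lambda>i. of_bool (i = j)) (\<lambda>_. 0) (\<lambda>_ _. 0)
           = (\<lambda>z. w j * of_bool (z j) + v j * (1 - of_bool (z j)))"
  unfolding lin_est_def Ynet_def fun_eq_iff using assms
  by (subst sum.mono_neutral_right[where S = "{j}"]) auto

lemma lin_est_unit_direct_effect:
  assumes "j < n"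
  shows "lin_est n w v (\<lambda>_. 0) (\<lambda>i. of_bool (i = j)) (\<lambda>_ _. 0) = (\<lambda>z. w j * of_bool (z j))"
  unfolding lin_est_def Ynet_def fun_eq_iff using assms
  by (subst sum.mono_neutral_right[where S = "{j}"]) auto

lemma integrable_pmf_of_bool:
  "integrable (measure_pmf D) (\<lambda>z. of_bool (P z) :: real)"
  by (rule measure_pmf.integrable_const_bound[where B = 1]) auto

lemma unbiased_without_interference_imp_zero_weights:
  fixes D :: "(nat \<Rightarrow> bool) pmf"
  assumes unbiased: "\<And>\<alpha> \<beta>. measure_pmf.expectation D (lin_est n w v \<alpha> \<beta> (\<lambda>_ _. 0)) = 0"
    and j: "j < n"
    and p_pos: "0 < measure_pmf.expectation D (\<lambda>z. of_bool (z j) :: real)"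
    and p_lt1: "measure_pmf.expectation D (\<lambda>z. of_bool (z j) :: real) < 1"
  shows "w j = 0 \<and> v j = 0"
proof -
  define p where "p = measure_pmf.expectation D (\<lambda>z. of_bool (z j) :: real)"
  have "w j * p = 0"
    using unbiased[of "\<lambda>_. 0" "\<lambda>i. of_bool (i = j)"]
    by (simp add: lin_est_unit_direct_effect[OF j] p_def integrable_pmf_of_bool)
  with p_pos have w: "w j = 0"
    by (simp add: p_def)
  have "w j * p + v j * (1 - p) = 0"
    using unbiased[of "\<lambda>i. of_bool (i = j)" "\<lambda>_. 0"]
    by (simp add: lin_est_unit_baseline[OF j] p_def integrable_pmf_of_bool algebra_simps)
  with w p_lt1 have "v j = 0"
    by (simp add: p_def)
  with w show ?thesis ..
qed

theorem theorem5:
  fixes n :: nat and E :: "(nat \<times> nat) set" and D :: "(nat \<Rightarrow> bool) pmf"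
  assumes E_sub: "E \<subseteq> {(k, i). k < n \<and> i < n \<and> k \<noteq> i}"
    and E_ne: "E \<noteq> {}"
    and design: "\<And>i. i < n \<Longrightarrow>
        0 < measure_pmf.expectation D (\<lambda>z. of_bool (z i) :: real) \<and>
        measure_pmf.expectation D (\<lambda>z. of_bool (z i) :: real) < 1"
  shows "\<not> (\<exists>w v :: nat \<Rightarrow> real. \<forall>\<alpha> \<beta> (\<gamma> :: nat \<Rightarrow> nat \<Rightarrow> real).
            (\<forall>k i. (k, i) \<notin> E \<longrightarrow> \<gamma> k i = 0) \<longrightarrow>
            measure_pmf.expectation D (lin_est n w v \<alpha> \<beta> \<gamma>) = AIE n \<alpha> \<beta> \<gamma>)"
proof
  assume "\<exists>w v :: nat \<Rightarrow> real. \<forall>\<alpha> \<beta> (\<gamma> :: nat \<Rightarrow> nat \<Rightarrow> real).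
            (\<forall>k i. (k, i) \<notin> E \<longrightarrow> \<gamma> k i = 0) \<longrightarrow>
            measure_pmf.expectation D (lin_est n w v \<alpha> \<beta> \<gamma>) = AIE n \<alpha> \<beta> \<gamma>"
  then obtain w v :: "nat \<Rightarrow> real" where unbiased: "\<And>\<alpha> \<beta> \<gamma>.
      (\<forall>k i. (k, i) \<notin> E \<longrightarrow> \<gamma> k i = 0) \<Longrightarrow>
      measure_pmf.expectation D (lin_est n w v \<alpha> \<beta> \<gamma>) = AIE n \<alpha> \<beta> \<gamma>"
    by blast
  have weights_zero: "w j = 0 \<and> v j = 0" if "j < n" for j
  proof (rule unbiased_without_interference_imp_zero_weights)
    show "measure_pmf.expectation D (lin_est n w v \<alpha> \<beta> (\<lambda>_ _. 0)) = 0" for \<alpha> \<beta>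
      using unbiased[of "\<lambda>_ _. 0"] by (simp add: AIE_no_interference)
  qed (use that design in auto)
  obtain k0 i0 where edge: "(k0, i0) \<in> E"
    using E_ne by auto
  with E_sub have "k0 < n" "i0 < n" "k0 \<noteq> i0"
    by auto
  moreover have "measure_pmf.expectation D (lin_est n w v (\<lambda>_. 0) (\<lambda>_. 0)
      (\<lambda>k i. of_bool (k = k0 \<and> i = i0))) = AIE n (\<lambda>_. 0) (\<lambda>_. 0) (\<lambda>k i. of_bool (k = k0 \<and> i = i0))"
    using edge by (intro unbiased) auto
  ultimately show False
    by (simp add: lin_est_zero_weights[OF weights_zero] AIE_single_edge)
qed

end
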